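(* Let $\Pi$ be an ASP(LC) program, let $\sigma^p$ be the set of propositional atoms occurring in $\Pi$ and $\sigma^f$ the set of object constants occurring in $\Pi$ that do not belong to the background signature $\sigma^{bg}$ (the theory of integers or of reals), and identify $\Pi$ with the conjunction of the formulas $B\land N\land LC\rightarrow a$ over all its rules. (a) If $(X,T)$ is an LJN-answer set of $\Pi$, then for every interpretation $\langle I^f,X\rangle$ of $\sigma^p\cup\sigma^f$ such that $I^f\models_{bg}T\cup\overline{T}$, we have $\langle I^f,X\rangle\models_{bg}\mathrm{SM}[\Pi;\sigma^p]$. (b) For every interpretation $I=\langle I^f,X\rangle$ of $\sigma^p\cup\sigma^f$, if $\langle I^f,X\rangle\models_{bg}\mathrm{SM}[\Pi;\sigma^p]$, then the LJN-interpretation $(X,T)$ with $T=\{t\mid t\text{ is a theory atom of }\Pi\text{ and }I^f\models_{bg}t\}$ is an LJN-answer set of $\Pi$.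
   Context: Formulas are (possibly many-sorted) first-order formulas built from $\bot,\land,\lor,\rightarrow,\forall,\exists$; $\neg F$ abbreviates $F\rightarrow\bot$, $\top$ abbreviates $\neg\bot$. Stable model operator. For predicate symbols $u,c$ of the same arity, $u\le c$ denotes $\forall\mathbf{x}(u(\mathbf{x})\rightarrow c(\mathbf{x}))$; $u=c$ denotes $\forall\mathbf{x}(u(\mathbf{x})\leftrightarrow c(\mathbf{x}))$ if $u,c$ are predicate symbols and $\forall\mathbf{x}(u(\mathbf{x})=c(\mathbf{x}))$ if they are function symbols; for lists these are conjunctions of the componentwise expressions. Let $\mathbf{c}$ be a list of distinct predicate and function constants and $\widehat{\mathbf{c}}$ a list of distinct predicate and function variables corresponding to $\mathbf{c}$. Write $\mathbf{c}^{pred}$, $\widehat{\mathbf{c}}^{pred}$ for the sublists of predicate symbols. $\widehat{\mathbf{c}}<\mathbf{c}$ abbreviates $(\widehat{\mathbf{c}}^{pred}\le\mathbf{c}^{pred})\land\neg(\widehat{\mathbf{c}}=\mathbf{c})$. For a formula $F$, $F^*(\widehat{\mathbf{c}})$ is defined recursively: if $F$ is atomic (including $\bot$), $F^*=F'\land F$ where $F'$ is obtained from $F$ by replacing every intensional constant from $\mathbf{c}$ by the corresponding variable from $\widehat{\mathbf{c}}$; $(G\land H)^*=G^*\land H^*$; $(G\lor H)^*=G^*\lor H^*$; $(G\rightarrow H)^*=(G^*\rightarrow H^* )\land(G\rightarrow H)$; $(\forall xG)^*=\forall xG^*$; $(\exists xG)^*=\exists xG^*$. Then $\mathrm{SM}[F;\mathbf{c}]$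 is the second-order formula $F\land\neg\exists\widehat{\mathbf{c}}(\widehat{\mathbf{c}}<\mathbf{c}\land F^*(\widehat{\mathbf{c}}))$. Background theory. Let $\sigma^{bg}$ be the (many-sorted) signature of a background theory $bg$; an interpretation of $\sigma^{bg}$ satisfying $bg$ is a background interpretation. For a signature $\sigma$ disjoint from $\sigma^{bg}$, an interpretation $I$ of $\sigma$ satisfies a (possibly second-order) sentence $F$ w.r.t. $bg$, written $I\models_{bg}F$, if there is a background interpretation $J$ of $\sigma^{bg}$ with the same universe as $I$ such that $I\cup J\models F$. For a signature of object and propositional constants, an interpretation is identified with $\langle I^f,X\rangle$, where $I^f$ is its restriction to the object constants and $X$ the set of propositional constants it makes true. ASP(LC) programs. An ASP(LC) program is a set of rules $a\leftarrow B,N,LC$, where $a$ is a propositional atom or $\bot$, $B$ is a set of propositional atoms, $N$ is a set of negative literals $\mathit{not}\ c$ ($c$ a propositional atom), and $LC$ is a set of theory atoms, i.e. linear constraints $\sum_{i=1}^n c_i\times x_i\bowtie k$ with $\bowtie\in\{\le,\ge,=\}$, each $x_i$ an object constant of sort integers (resp. reals) and $c_i,k$ integers (resp. reals); theory atoms are sentences of $\sigma^f\cup\sigma^{bg}$. As a formula, commas are conjunctions and $\mathit{not}$ is $\neg$. An LJN-interpretation is a pair $(X,T)$ with $X\subseteq\sigma^p$ and $T$ a subset of the theory atoms occurring in $\Pi$ such that some interpretation $I$ of $\sigma^f$ satisfies $I\models_{bg}T\cup\overline{T}$, where $\overline{T}$ is the set of negations of the theory atoms occurring in $\Pi$ but not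 in $T$. $(X,T)$ satisfies an atom $b$ iff $b\in X$, a literal $\mathit{not}\ c$ iff $c\notin X$, a theory atom $t$ iff $t\in T$, and compound formulas as usual. The LJN-reduct $\Pi^{(X,T)}$ consists of the rules $a\leftarrow B$ for each rule $a\leftarrow B,N,LC$ of $\Pi$ such that $(X,T)$ satisfies $N\land LC$. $(X,T)$ is an LJN-answer set of $\Pi$ if $(X,T)$ satisfies $\Pi$ and $X$ is the smallest set of atoms satisfying $\Pi^{(X,T)}$. *)

theory Defs
  imports Main
begin

datatype rel = Le | Ge | Eq

text \<open>A theory atom  sum_i c_i * x_i REL k ; x_i object constants of type 'c,
  coefficients and k numbers of the background sort 'n (integers or reals).\<close>
datatype ('c, 'n) lc = LinC "('n \<times> 'c) list" rel 'n

fun lc_holds :: "('c \<Rightarrow> 'n::linordered_idom) \<Rightarrow> ('c, 'n) lc \<Rightarrow> bool" where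
  "lc_holds Ifn (LinC cs r k) =
     (let s = (\<Sum>(a, x) \<leftarrow> cs. a * Ifn x) in
      (case r of Le \<Rightarrow> s \<le> k | Ge \<Rightarrow> s \<ge> k | Eq \<Rightarrow> s = k))"

datatype ('p, 't) atm = PA 'p | HA 'p | TA 't
  \<comment> \<open>PA p: intensional atom p; HA p: the corresponding variable p-hat; TA t: theory atom\<close>

datatype 'a fm = Bot | Atom 'a | And "'a fm" "'a fm" | Or "'a fm" "'a fm" | Imp "'a fm" "'a fm"

definition Neg :: "'a fm \<Rightarrow> 'a fm" where "Neg F = Imp F Bot"
definition Top :: "'a fm" where "Top = Neg Bot"

fun conj_list :: "'a fm list \<Rightarrow> 'a fm" where
  "conj_list [] = Top"
| "conj_list [F] = F"
| "conj_list (F # Fs) = And F (conj_list Fs)"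

text \<open>Evaluation: Tv gives the truth values of theory atoms, X interprets the
  intensional atoms, Y interprets their hatted counterparts.\<close>
fun eval :: "('t \<Rightarrow> bool) \<Rightarrow> 'p set \<Rightarrow> 'p set \<Rightarrow> ('p, 't) atm fm \<Rightarrow> bool" where
  "eval Tv X Y Bot = False"
| "eval Tv X Y (Atom (PA p)) = (p \<in> X)"
| "eval Tv X Y (Atom (HA p)) = (p \<in> Y)"
| "eval Tv X Y (Atom (TA t)) = Tv t"
| "eval Tv X Y (And F G) = (eval Tv X Y F \<and> eval Tv X Y G)"
| "eval Tv X Y (Or F G) = (eval Tv X Y F \<or> eval Tv X Y G)"
| "eval Tv X Y (Imp F G) = (eval Tv X Y F \<longrightarrow> eval Tv X Y G)"

text \<open>F* w.r.t. the intensional constants sigma^p (only the PA atoms are intensional).\<close>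
fun star :: "('p, 't) atm fm \<Rightarrow> ('p, 't) atm fm" where
  "star Bot = And Bot Bot"
| "star (Atom (PA p)) = And (Atom (HA p)) (Atom (PA p))"
| "star (Atom a) = And (Atom a) (Atom a)"
| "star (And F G) = And (star F) (star G)"
| "star (Or F G) = Or (star F) (star G)"
| "star (Imp F G) = And (Imp (star F) (star G)) (Imp F G)"

text \<open>A rule  a <- B, N, LC : head (None = bottom), positive body B,
  atoms c of the negative literals  not c  in N, theory atoms LC.\<close>
type_synonym ('p, 't) rule = "'p option \<times> 'p list \<times> 'p list \<times> 't list"
type_synonym ('p, 't) prog = "('p, 't) rule list"

definition rhead :: "('p, 't) rule \<Rightarrow> 'p option" where "rhead r = fst r"
definition rpos :: "('p, 't) rule \<Rightarrow> 'p list" where "rpos r = fst (snd r)"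
definition rneg :: "('p, 't) rule \<Rightarrow> 'p list" where "rneg r = fst (snd (snd r))"
definition rlc :: "('p, 't) rule \<Rightarrow> 't list" where "rlc r = snd (snd (snd r))"

definition head_fm :: "'p option \<Rightarrow> ('p, 't) atm fm" where
  "head_fm h = (case h of None \<Rightarrow> Bot | Some a \<Rightarrow> Atom (PA a))"

definition B_fm :: "('p, 't) rule \<Rightarrow> ('p, 't) atm fm" where
  "B_fm r = conj_list (map (\<lambda>b. Atom (PA b)) (rpos r))"
definition N_fm :: "('p, 't) rule \<Rightarrow> ('p, 't) atm fm" where
  "N_fm r = conj_list (map (\<lambda>c. Neg (Atom (PA c))) (rneg r))"
definition LC_fm :: "('p, 't) rule \<Rightarrow> ('p, 't) atm fm" where
  "LC_fm r = conj_list (map (\<lambda>t. Atom (TA t)) (rlc r))"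

definition rule_fm :: "('p, 't) rule \<Rightarrow> ('p, 't) atm fm" where
  "rule_fm r = Imp (And (B_fm r) (And (N_fm r) (LC_fm r))) (head_fm (rhead r))"

definition prog_fm :: "('p, 't) prog \<Rightarrow> ('p, 't) atm fm" where
  "prog_fm \<Pi> = conj_list (map rule_fm \<Pi>)"

definition patoms :: "('p, 't) prog \<Rightarrow> 'p set" where
  "patoms \<Pi> = (\<Union>r\<in>set \<Pi>. set_option (rhead r) \<union> set (rpos r) \<union> set (rneg r))"

definition tatoms :: "('p, 't) prog \<Rightarrow> 't set" where
  "tatoms \<Pi> = (\<Union>r\<in>set \<Pi>. set (rlc r))"

text \<open><Ifn, X> |=_bg SM[Pi; sigma^p]: the background interpretation is the standard
  structure of the sort 'n, so a theory atom t is true iff lc_holds Ifn t.  The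
  predicate variables p-hat range over subsets Y of the atoms; hat(c) < c means
  Y is a subset of X different from X.\<close>
definition sm_sat :: "('p, ('c, 'n::linordered_idom) lc) prog \<Rightarrow> ('c \<Rightarrow> 'n) \<Rightarrow> 'p set \<Rightarrow> bool" where
  "sm_sat \<Pi> Ifn X \<longleftrightarrow>
     eval (lc_holds Ifn) X X (prog_fm \<Pi>) \<and>
     \<not> (\<exists>Y. Y \<subseteq> X \<and> Y \<noteq> X \<and> eval (lc_holds Ifn) X Y (star (prog_fm \<Pi>)))"

definition ljn_interp :: "('p, ('c, 'n::linordered_idom) lc) prog \<Rightarrow> 'p set \<Rightarrow> ('c, 'n) lc set \<Rightarrow> bool" where
  "ljn_interp \<Pi> X T \<longleftrightarrow> X \<subseteq> patoms \<Pi> \<and> T \<subseteq> tatoms \<Pi> \<and>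
     (\<exists>Ifn::'c \<Rightarrow> 'n. \<forall>t\<in>tatoms \<Pi>. lc_holds Ifn t \<longleftrightarrow> t \<in> T)"

definition ljn_sat :: "'p set \<Rightarrow> 't set \<Rightarrow> ('p, 't) atm fm \<Rightarrow> bool" where
  "ljn_sat X T F = eval (\<lambda>t. t \<in> T) X X F"

definition ljn_reduct :: "('p, 't) prog \<Rightarrow> 'p set \<Rightarrow> 't set \<Rightarrow> ('p, 't) prog" where
  "ljn_reduct \<Pi> X T =
     map (\<lambda>r. (rhead r, rpos r, [], []))
       (filter (\<lambda>r. ljn_sat X T (And (N_fm r) (LC_fm r))) \<Pi>)"

definition pos_sat :: "'p set \<Rightarrow> ('p, 't) prog \<Rightarrow> bool" where
  "pos_sat Z P \<longleftrightarrow> (\<forall>r\<in>set P. set (rpos r) \<subseteq> Z \<longrightarrow>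
       (case rhead r of None \<Rightarrow> False | Some a \<Rightarrow> a \<in> Z))"

definition ljn_answer_set :: "('p, ('c, 'n::linordered_idom) lc) prog \<Rightarrow> 'p set \<Rightarrow> ('c, 'n) lc set \<Rightarrow> bool" where
  "ljn_answer_set \<Pi> X T \<longleftrightarrow>
     ljn_interp \<Pi> X T \<and> ljn_sat X T (prog_fm \<Pi>) \<and>
     pos_sat X (ljn_reduct \<Pi> X T) \<and>
     (\<forall>Z. pos_sat Z (ljn_reduct \<Pi> X T) \<longrightarrow> X \<subseteq> Z)"

end

theory Submission
  imports Defs
begin

text \<open>For \<open>Y \<subseteq> X\<close> the starred negative literal \<open>(\<not> c)\<^sup>*\<close> is equivalent to \<open>c \<notin> X\<close>,
  and theory atoms are not intensional, so \<open>\<Pi>\<^sup>*(Y)\<close> holds exactly when \<open>\<Pi>\<close> holds in \<open>X\<close>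
  and \<open>Y\<close> is a model of the LJN-reduct of \<open>\<Pi>\<close> w.r.t. \<open>X\<close>.  Thus \<open>SM[\<Pi>; \<sigma>\<^sup>p]\<close> says that \<open>X\<close>
  is a minimal model of the reduct; models of a positive program are closed under
  intersection, so minimal means least, which is the LJN condition.\<close>

definition head_in :: "'p option \<Rightarrow> 'p set \<Rightarrow> bool" where
  "head_in h S \<longleftrightarrow> (case h of None \<Rightarrow> False | Some a \<Rightarrow> a \<in> S)"

definition rule_active :: "('t \<Rightarrow> bool) \<Rightarrow> 'p set \<Rightarrow> ('p, 't) rule \<Rightarrow> bool" where
  "rule_active Tv X r \<longleftrightarrow> (\<forall>c\<in>set (rneg r). c \<notin> X) \<and> (\<forall>t\<in>set (rlc r). Tv t)"

lemma eval_conj_list: "eval Tv X Y (conj_list Fs) \<longleftrightarrow> (\<forall>F\<in>set Fs. eval Tv X Y F)"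
  by (induction Fs rule: conj_list.induct) (auto simp: Top_def Neg_def)

lemma eval_star_conj_list:
  "eval Tv X Y (star (conj_list Fs)) \<longleftrightarrow> (\<forall>F\<in>set Fs. eval Tv X Y (star F))"
  by (induction Fs rule: conj_list.induct) (auto simp: Top_def Neg_def)

lemma eval_rule_fm:
  "eval Tv X X (rule_fm r) \<longleftrightarrow>
     (rule_active Tv X r \<and> set (rpos r) \<subseteq> X \<longrightarrow> head_in (rhead r) X)"
  by (auto simp: rule_fm_def B_fm_def N_fm_def LC_fm_def head_fm_def rule_active_def
      eval_conj_list Neg_def head_in_def split: option.splits)

lemma eval_star_rule_fm:
  assumes "Y \<subseteq> X"
  shows "eval Tv X Y (star (rule_fm r)) \<longleftrightarrow> eval Tv X X (rule_fm r) \<and>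
     (rule_active Tv X r \<and> set (rpos r) \<subseteq> Y \<longrightarrow> head_in (rhead r) Y)"
  using assms
  by (auto simp: rule_fm_def B_fm_def N_fm_def LC_fm_def head_fm_def rule_active_def
      eval_star_conj_list eval_conj_list Neg_def head_in_def split: option.splits)

lemma rule_active_cong:
  assumes "\<forall>t\<in>tatoms \<Pi>. Tv t \<longleftrightarrow> t \<in> T" and "r \<in> set \<Pi>"
  shows "rule_active Tv X r \<longleftrightarrow> rule_active (\<lambda>t. t \<in> T) X r"
  using assms by (auto simp: rule_active_def tatoms_def)

lemma pos_sat_ljn_reduct:
  "pos_sat Z (ljn_reduct \<Pi> X T) \<longleftrightarrow>
     (\<forall>r\<in>set \<Pi>. rule_active (\<lambda>t. t \<in> T) X r \<and> set (rpos r) \<subseteq> Z \<longrightarrow> head_in (rhead r) Z)"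
proof -
  have "ljn_sat X T (And (N_fm r) (LC_fm r)) \<longleftrightarrow> rule_active (\<lambda>t. t \<in> T) X r" for r
    by (auto simp: ljn_sat_def N_fm_def LC_fm_def rule_active_def eval_conj_list Neg_def)
  then have reduct: "set (ljn_reduct \<Pi> X T) =
      (\<lambda>r. (rhead r, rpos r, [], [])) ` {r \<in> set \<Pi>. rule_active (\<lambda>t. t \<in> T) X r}"
    by (simp add: ljn_reduct_def)
  show ?thesis
    by (simp add: pos_sat_def head_in_def reduct rhead_def rpos_def imp_conjL del: split_paired_All)
      (simp add: Ball_def)
qed

lemma pos_sat_Int: "pos_sat A P \<Longrightarrow> pos_sat B P \<Longrightarrow> pos_sat (A \<inter> B) P"
  by (auto simp: pos_sat_def split: option.splits)

lemma pos_sat_minimal_iff_least: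
  assumes "pos_sat X P"
  shows "\<not> (\<exists>Y. Y \<subseteq> X \<and> Y \<noteq> X \<and> pos_sat Y P) \<longleftrightarrow> (\<forall>Z. pos_sat Z P \<longrightarrow> X \<subseteq> Z)"
proof
  assume minimal: "\<not> (\<exists>Y. Y \<subseteq> X \<and> Y \<noteq> X \<and> pos_sat Y P)"
  show "\<forall>Z. pos_sat Z P \<longrightarrow> X \<subseteq> Z"
  proof (intro allI impI)
    fix Z assume "pos_sat Z P"
    then have "pos_sat (Z \<inter> X) P" using assms by (rule pos_sat_Int)
    with minimal show "X \<subseteq> Z" by blast
  qed
qed blast

lemma eval_prog_fm_iff_ljn_sat:
  assumes "\<forall>t\<in>tatoms \<Pi>. Tv t \<longleftrightarrow> t \<in> T"
  shows "eval Tv X X (prog_fm \<Pi>) \<longleftrightarrow> ljn_sat X T (prog_fm \<Pi>)"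
  using rule_active_cong[OF assms]
  by (simp add: ljn_sat_def prog_fm_def eval_conj_list eval_rule_fm)

lemma ljn_sat_imp_pos_sat_ljn_reduct:
  "ljn_sat X T (prog_fm \<Pi>) \<Longrightarrow> pos_sat X (ljn_reduct \<Pi> X T)"
  by (simp add: ljn_sat_def prog_fm_def eval_conj_list eval_rule_fm pos_sat_ljn_reduct)

lemma eval_star_prog_fm_iff_pos_sat_ljn_reduct:
  assumes "\<forall>t\<in>tatoms \<Pi>. Tv t \<longleftrightarrow> t \<in> T" and "Y \<subseteq> X"
  shows "eval Tv X Y (star (prog_fm \<Pi>)) \<longleftrightarrow>
     ljn_sat X T (prog_fm \<Pi>) \<and> pos_sat Y (ljn_reduct \<Pi> X T)"
proof -
  have "eval Tv X Y (star (prog_fm \<Pi>)) \<longleftrightarrow>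
      eval Tv X X (prog_fm \<Pi>) \<and>
      (\<forall>r\<in>set \<Pi>. rule_active Tv X r \<and> set (rpos r) \<subseteq> Y \<longrightarrow> head_in (rhead r) Y)"
    by (auto simp: prog_fm_def eval_star_conj_list eval_conj_list eval_star_rule_fm[OF assms(2)])
  then show ?thesis
    using rule_active_cong[OF assms(1)]
    by (simp add: eval_prog_fm_iff_ljn_sat[OF assms(1)] pos_sat_ljn_reduct)
qed

lemma sm_sat_iff_least_model_of_ljn_reduct:
  assumes agree: "\<forall>t\<in>tatoms \<Pi>. lc_holds Ifn t \<longleftrightarrow> t \<in> T"
  shows "sm_sat \<Pi> Ifn X \<longleftrightarrow>
     ljn_sat X T (prog_fm \<Pi>) \<and> pos_sat X (ljn_reduct \<Pi> X T) \<and>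
     (\<forall>Z. pos_sat Z (ljn_reduct \<Pi> X T) \<longrightarrow> X \<subseteq> Z)"
proof -
  let ?P = "ljn_reduct \<Pi> X T"
  have "eval (lc_holds Ifn) X Y (star (prog_fm \<Pi>)) \<longleftrightarrow>
      ljn_sat X T (prog_fm \<Pi>) \<and> pos_sat Y ?P" if "Y \<subseteq> X" for Y
    using agree that by (rule eval_star_prog_fm_iff_pos_sat_ljn_reduct)
  then have "sm_sat \<Pi> Ifn X \<longleftrightarrow>
      ljn_sat X T (prog_fm \<Pi>) \<and> \<not> (\<exists>Y. Y \<subseteq> X \<and> Y \<noteq> X \<and> pos_sat Y ?P)"
    unfolding sm_sat_def eval_prog_fm_iff_ljn_sat[OF agree] by blast
  then show ?thesis
    using ljn_sat_imp_pos_sat_ljn_reduct[of X T \<Pi>] pos_sat_minimal_iff_least[of X ?P] by blast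
qed

theorem theorem4:
  fixes \<Pi> :: "('p, ('c, 'n::linordered_idom) lc) prog"
  shows "(\<forall>X T (Ifn::'c \<Rightarrow> 'n). ljn_answer_set \<Pi> X T \<and>
            (\<forall>t\<in>tatoms \<Pi>. lc_holds Ifn t \<longleftrightarrow> t \<in> T)
            \<longrightarrow> sm_sat \<Pi> Ifn X)
       \<and> (\<forall>(Ifn::'c \<Rightarrow> 'n) X. X \<subseteq> patoms \<Pi> \<and> sm_sat \<Pi> Ifn X
            \<longrightarrow> ljn_answer_set \<Pi> X {t \<in> tatoms \<Pi>. lc_holds Ifn t})"
proof (intro conjI allI impI; elim conjE)
  fix X T and Ifn :: "'c \<Rightarrow> 'n"
  assume "ljn_answer_set \<Pi> X T" and agree: "\<forall>t\<in>tatoms \<Pi>. lc_holds Ifn t \<longleftrightarrow> t \<in> T"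
  then show "sm_sat \<Pi> Ifn X"
    by (simp add: sm_sat_iff_least_model_of_ljn_reduct[OF agree] ljn_answer_set_def)
next
  fix X and Ifn :: "'c \<Rightarrow> 'n"
  assume "X \<subseteq> patoms \<Pi>" and "sm_sat \<Pi> Ifn X"
  define T where "T = {t \<in> tatoms \<Pi>. lc_holds Ifn t}"
  have agree: "\<forall>t\<in>tatoms \<Pi>. lc_holds Ifn t \<longleftrightarrow> t \<in> T"
    by (simp add: T_def)
  then have "ljn_interp \<Pi> X T"
    using \<open>X \<subseteq> patoms \<Pi>\<close> by (auto simp: ljn_interp_def T_def)
  with \<open>sm_sat \<Pi> Ifn X\<close> show "ljn_answer_set \<Pi> X {t \<in> tatoms \<Pi>. lc_holds Ifn t}"
    unfolding T_def[symmetric] ljn_answer_set_def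
    by (simp add: sm_sat_iff_least_model_of_ljn_reduct[OF agree])
qed

end
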